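(* For $U>0$, $\mu\in\mathbb{R}$, $T\ge0$ there exist constants $\eta>0$, $C>0$ depending only on $T,U,\mu$ such that for all $(\gamma,\alpha,\rho_0)\in\mathcal{D}$, $\mathcal{F}(\gamma,\alpha,\rho_0)\ge \eta(\rho_0^2+\rho_\gamma^2)-C$, where $\rho_\gamma=\int_{\mathbb{T}^3}\gamma\,dp$. In particular, for any minimizing sequence $(\gamma_n,\alpha_n,\rho_{0,n})$ of $\mathcal{F}$ over $\mathcal{D}$, the sequence $\rho_{0,n}$ is bounded and the sequences $\gamma_n$ and $\alpha_n$ are bounded in $L^1(\mathbb{T}^3)$.
   Context: Let $\mathbb{T}^3=[-\pi,\pi]^3$ with periodic identification and normalized Haar measure $dp$. Let $\varepsilon(p)=4\sum_{k=1}^3\sin^2(p_k/2)$. $\mathcal{D}=\{(\gamma,\alpha,\rho_0): \gamma\in L^1(\mathbb{T}^3),\ \gamma\ge0,\ \alpha^2\le\gamma(1+\gamma)\text{ a.e.},\ \rho_0\ge0\}$. With $\beta=\sqrt{(\tfrac12+\gamma)^2-\alpha^2}$, $S(\gamma,\alpha)=\int\big[(\beta+\tfrac12)\ln(\beta+\tfrac12)-(\beta-\tfrac12)\ln(\beta-\tfrac12)\big]dp$, and $\mathcal{F}(\gamma,\alpha,\rho_0)=\int(\varepsilon-\mu)\gamma\,dp-\mu\rho_0-TS(\gamma,\alpha)+\frac U2(\int\alpha)^2+U(\int\gamma)^2+U\rho_0\int\alpha+2U\rho_0\int\gamma+\frac U2\rho_0^2$ (integrals over $\mathbb{T}^3$).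 *)

theory Defs
  imports "HOL-Analysis.Analysis"
begin

text \<open>The torus T^3 = [-pi,pi]^3 with normalized Haar measure dp, realised as the
uniform (normalized Lebesgue) probability measure on the cube.\<close>
definition torus :: "(real^3) measure" where
  "torus = uniform_measure lborel (cbox (\<chi> i. - pi) (\<chi> i. pi))"

definition disp :: "real^3 \<Rightarrow> real" where
  "disp p = 4 * (\<Sum>k\<in>UNIV. (sin (p$k / 2))\<^sup>2)"

definition betaf :: "(real^3 \<Rightarrow> real) \<Rightarrow> (real^3 \<Rightarrow> real) \<Rightarrow> real^3 \<Rightarrow> real" where
  "betaf g a p = sqrt ((1/2 + g p)\<^sup>2 - (a p)\<^sup>2)"

definition sfun :: "real \<Rightarrow> real" where
  "sfun b = (b + 1/2) * ln (b + 1/2) - (b - 1/2) * ln (b - 1/2)"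

definition entropy :: "(real^3 \<Rightarrow> real) \<Rightarrow> (real^3 \<Rightarrow> real) \<Rightarrow> real" where
  "entropy g a = (\<integral>p. sfun (betaf g a p) \<partial>torus)"

definition domD :: "((real^3 \<Rightarrow> real) \<times> (real^3 \<Rightarrow> real) \<times> real) set" where
  "domD = {(g, a, r). integrable torus g \<and> a \<in> borel_measurable torus \<and>
      (AE p in torus. 0 \<le> g p \<and> (a p)\<^sup>2 \<le> g p * (1 + g p)) \<and> 0 \<le> r}"

definition Ffun :: "real \<Rightarrow> real \<Rightarrow> real \<Rightarrow> (real^3 \<Rightarrow> real) \<Rightarrow> (real^3 \<Rightarrow> real) \<Rightarrow> real \<Rightarrow> real" where
  "Ffun T U \<mu> g a r =
     (\<integral>p. (disp p - \<mu>) * g p \<partial>torus) - \<mu> * r - T * entropy g a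
     + U / 2 * (\<integral>p. a p \<partial>torus)\<^sup>2 + U * (\<integral>p. g p \<partial>torus)\<^sup>2
     + U * r * (\<integral>p. a p \<partial>torus) + 2 * U * r * (\<integral>p. g p \<partial>torus) + U / 2 * r\<^sup>2"

end

theory Submission
  imports Defs "HOL-Probability.Probability_Measure"
begin

text \<open>The pointwise constraint \<open>\<alpha>\<^sup>2 \<le> \<gamma>(1 + \<gamma>)\<close> gives \<open>|\<alpha>| \<le> \<gamma> + 1/2\<close> and
  \<open>1/2 \<le> \<beta> \<le> \<gamma> + 1/2\<close>, and the entropy density satisfies \<open>s(\<beta>) \<le> \<beta> + 1/2\<close>; hence
  \<open>S \<le> 1 + \<rho>\<^sub>\<gamma>\<close> and \<open>|\<integral>\<alpha>| \<le> \<rho>\<^sub>\<gamma> + 1/2\<close>, while the kinetic term is at least \<open>-\<mu> \<rho>\<^sub>\<gamma>\<close>.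
  The interaction terms equal \<open>U/2 (\<integral>\<alpha> + \<rho>\<^sub>0)\<^sup>2 + U \<rho>\<^sub>\<gamma>\<^sup>2 + 2 U \<rho>\<^sub>0 \<rho>\<^sub>\<gamma>\<close>, and with the bound
  on \<open>\<integral>\<alpha>\<close> this is at least \<open>U/8 \<rho>\<^sub>0\<^sup>2 + U/2 \<rho>\<^sub>\<gamma>\<^sup>2 - U/8\<close>. These quadratic terms absorb the
  remaining linear terms by Young's inequality. Along a minimizing sequence the energies are
  bounded, so \<open>\<rho>\<^sub>0\<close> and \<open>\<rho>\<^sub>\<gamma> = \<parallel>\<gamma>\<parallel>\<^sub>1\<close> stay bounded, and so does \<open>\<parallel>\<alpha>\<parallel>\<^sub>1 \<le> \<rho>\<^sub>\<gamma> + 1/2\<close>.\<close>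

lemma young_mult_le:
  fixes c x e :: real
  assumes "e > 0"
  shows "c * x \<le> e * x\<^sup>2 + c\<^sup>2 / (4 * e)"
proof -
  have "e * x\<^sup>2 + c\<^sup>2 / (4 * e) - c * x = (2 * e * x - c)\<^sup>2 / (4 * e)"
    using assms by (simp add: field_simps power2_eq_square)
  moreover have "(2 * e * x - c)\<^sup>2 / (4 * e) \<ge> 0"
    using assms by simp
  ultimately show ?thesis by linarith
qed

lemma sfun_le_add_half:
  fixes b :: real
  assumes "b \<ge> 1/2"
  shows "sfun b \<le> b + 1/2"
proof -
  define x where "x = b - 1/2"
  have x: "x \<ge> 0" using assms by (simp add: x_def)
  have "ln (x + 1) \<le> x"
    using ln_add_one_self_le_self[OF x] by (simp add: add.commute)
  moreover have "x * (ln (x + 1) - ln x) \<le> 1"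
  proof (cases "x = 0")
    case False
    then have "ln (x + 1) - ln x = ln ((x + 1) / x)"
      using x by (simp add: ln_div)
    also have "\<dots> \<le> 1 / x"
      using ln_le_minus_one[of "(x + 1) / x"] x False by (simp add: field_simps)
    finally show ?thesis
      using x False mult_left_mono by (fastforce simp: field_simps)
  qed simp
  moreover have "sfun b = ln (x + 1) + x * (ln (x + 1) - ln x)"
    by (simp add: sfun_def x_def algebra_simps)
  ultimately show ?thesis by (simp add: x_def)
qed

lemma abs_le_add_half_of_sq_le:
  fixes g a :: real
  assumes "0 \<le> g" and "a\<^sup>2 \<le> g * (1 + g)"
  shows "\<bar>a\<bar> \<le> g + 1/2"
proof -
  have "a\<^sup>2 \<le> (g + 1/2)\<^sup>2"
    using assms(2) by (simp add: power2_eq_square algebra_simps)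
  then have "\<bar>a\<bar> \<le> \<bar>g + 1/2\<bar>"
    by (simp add: abs_le_square_iff)
  then show ?thesis
    using assms(1) by simp
qed

lemma betaf_bounds:
  assumes "0 \<le> g p" and "(a p)\<^sup>2 \<le> g p * (1 + g p)"
  shows "1/2 \<le> betaf g a p" and "betaf g a p \<le> g p + 1/2"
proof -
  have "(1/2)\<^sup>2 \<le> (1/2 + g p)\<^sup>2 - (a p)\<^sup>2"
    using assms(2) by (simp add: power2_eq_square algebra_simps)
  then show "1/2 \<le> betaf g a p"
    unfolding betaf_def by (rule real_le_rsqrt)
  have "sqrt ((1/2 + g p)\<^sup>2 - (a p)\<^sup>2) \<le> sqrt ((1/2 + g p)\<^sup>2)"
    by (rule real_sqrt_le_mono) simp
  then show "betaf g a p \<le> g p + 1/2"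
    using assms(1) by (simp add: betaf_def)
qed

lemma prob_space_torus: "prob_space torus"
  unfolding torus_def
proof (rule prob_space_uniform_measure)
  let ?Q = "cbox (\<chi> i. - pi) (\<chi> i. pi) :: (real^3) set"
  have "0 < Henstock_Kurzweil_Integration.content ?Q"
  proof (rule content_pos_lt, intro ballI)
    fix i :: "real^3"
    assume "i \<in> Basis"
    then obtain j where "i = axis j 1" by (auto simp: Basis_vec_def)
    then show "(\<chi> i. - pi) \<bullet> i < (\<chi> i. pi) \<bullet> i" by (simp add: inner_axis)
  qed
  moreover have "emeasure lborel ?Q < \<infinity>"
    by (rule emeasure_bounded_finite) simp
  ultimately show "emeasure lborel ?Q \<noteq> 0" "emeasure lborel ?Q \<noteq> \<infinity>"
    by (auto simp: emeasure_eq_ennreal_measure)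
qed

lemma disp_measurable [measurable]: "disp \<in> borel_measurable torus"
  unfolding disp_def torus_def by measurable

lemma disp_nonneg: "0 \<le> disp p"
  unfolding disp_def by (simp add: sum_nonneg)

lemma disp_le_12: "disp p \<le> 12"
proof -
  have "(\<Sum>k\<in>(UNIV::3 set). (sin (p$k / 2))\<^sup>2) \<le> of_nat (card (UNIV::3 set)) * 1"
    by (rule sum_bounded_above) (simp add: abs_sin_le_one abs_square_le_1)
  then show ?thesis unfolding disp_def by simp
qed

lemma kinetic_integral_ge:
  assumes "integrable torus g" and "AE p in torus. 0 \<le> g p"
  shows "- \<mu> * (\<integral>p. g p \<partial>torus) \<le> (\<integral>p. (disp p - \<mu>) * g p \<partial>torus)"
proof -
  have "integrable torus (\<lambda>p. (disp p - \<mu>) * g p)"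
  proof (rule Bochner_Integration.integrable_bound)
    show "integrable torus (\<lambda>p. (12 + \<bar>\<mu>\<bar>) * g p)"
      using assms(1) by simp
    show "(\<lambda>p. (disp p - \<mu>) * g p) \<in> borel_measurable torus"
      using assms(1) by measurable
    have "\<bar>disp p - \<mu>\<bar> * \<bar>g p\<bar> \<le> (12 + \<bar>\<mu>\<bar>) * \<bar>g p\<bar>" for p
      using disp_nonneg[of p] disp_le_12[of p] by (intro mult_right_mono) auto
    then show "AE p in torus. norm ((disp p - \<mu>) * g p) \<le> norm ((12 + \<bar>\<mu>\<bar>) * g p)"
      by (simp add: abs_mult)
  qed
  moreover have "AE p in torus. - \<mu> * g p \<le> (disp p - \<mu>) * g p"
    using assms(2) by eventually_elim (simp add: algebra_simps disp_nonneg)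
  ultimately have "(\<integral>p. - \<mu> * g p \<partial>torus) \<le> (\<integral>p. (disp p - \<mu>) * g p \<partial>torus)"
    using assms(1) by (intro integral_mono_AE) auto
  then show ?thesis by simp
qed

lemma
  assumes "(g, a, r) \<in> domD"
  shows domD_nonneg: "0 \<le> r" "0 \<le> (\<integral>p. g p \<partial>torus)"
    and domD_integral_abs_eq: "(\<integral>p. \<bar>g p\<bar> \<partial>torus) = (\<integral>p. g p \<partial>torus)"
    and domD_integral_abs_le: "(\<integral>p. \<bar>a p\<bar> \<partial>torus) \<le> (\<integral>p. g p \<partial>torus) + 1/2"
proof -
  interpret prob_space torus by (rule prob_space_torus)
  have g: "integrable torus g" and a: "a \<in> borel_measurable torus"
    and ae: "AE p in torus. 0 \<le> g p \<and> (a p)\<^sup>2 \<le> g p * (1 + g p)"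
    using assms by (auto simp: domD_def)
  show "0 \<le> r" using assms by (simp add: domD_def)
  show "0 \<le> (\<integral>p. g p \<partial>torus)"
    using ae by (intro integral_nonneg_AE) auto
  show "(\<integral>p. \<bar>g p\<bar> \<partial>torus) = (\<integral>p. g p \<partial>torus)"
    using g ae by (intro integral_cong_AE) auto
  have g': "integrable torus (\<lambda>p. g p + 1/2)"
    using g by simp
  have ae_a: "AE p in torus. \<bar>a p\<bar> \<le> g p + 1/2"
    using ae by eventually_elim (simp add: abs_le_add_half_of_sq_le)
  have "integrable torus a"
    using ae_a by (intro Bochner_Integration.integrable_bound[OF g' a]) auto
  then have "(\<integral>p. \<bar>a p\<bar> \<partial>torus) \<le> (\<integral>p. g p + 1/2 \<partial>torus)"
    using g' ae_a by (intro integral_mono_AE) auto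
  also have "\<dots> = (\<integral>p. g p \<partial>torus) + 1/2"
    using g by (simp add: prob_space)
  finally show "(\<integral>p. \<bar>a p\<bar> \<partial>torus) \<le> (\<integral>p. g p \<partial>torus) + 1/2" .
qed

lemma entropy_le:
  assumes "(g, a, r) \<in> domD"
  shows "entropy g a \<le> 1 + (\<integral>p. g p \<partial>torus)"
proof (cases "integrable torus (\<lambda>p. sfun (betaf g a p))")
  case True
  interpret prob_space torus by (rule prob_space_torus)
  have g: "integrable torus g"
    and ae: "AE p in torus. 0 \<le> g p \<and> (a p)\<^sup>2 \<le> g p * (1 + g p)"
    using assms by (auto simp: domD_def)
  have "AE p in torus. sfun (betaf g a p) \<le> 1 + g p"
    using ae
  proof eventually_elim
    case (elim p)
    with betaf_bounds[of g p a] sfun_le_add_half show ?case by fastforce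
  qed
  then have "entropy g a \<le> (\<integral>p. 1 + g p \<partial>torus)"
    unfolding entropy_def using True g by (intro integral_mono_AE) auto
  also have "\<dots> = 1 + (\<integral>p. g p \<partial>torus)"
    using g by (simp add: prob_space)
  finally show ?thesis .
next
  case False
  then show ?thesis
    using domD_nonneg(2)[OF assms] by (simp add: entropy_def not_integrable_integral_eq)
qed

lemma interaction_lower_bound:
  fixes U r \<rho> A :: real
  assumes "U \<ge> 0" and "r \<ge> 0" and "\<rho> \<ge> 0" and "\<bar>A\<bar> \<le> \<rho> + 1/2"
  shows "U/8 * r\<^sup>2 + U/2 * \<rho>\<^sup>2 - U/8
    \<le> U/2 * A\<^sup>2 + U * \<rho>\<^sup>2 + U * r * A + 2 * U * r * \<rho> + U/2 * r\<^sup>2"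
proof -
  have "A\<^sup>2 \<le> (\<rho> + 1/2)\<^sup>2"
    using power_mono[OF assms(4) abs_ge_zero, of 2] by simp
  also have "\<dots> \<le> 2 * \<rho>\<^sup>2 + 1/2"
    using zero_le_power2[of "\<rho> - 1/2"] by (simp add: power2_eq_square algebra_simps)
  finally have A: "0 \<le> 2 * \<rho>\<^sup>2 + 1/2 - A\<^sup>2" by simp
  have "0 \<le> 6 * (A + 2/3 * r)\<^sup>2 + r\<^sup>2 / 3"
    by simp
  also have "\<dots> = 6 * A\<^sup>2 + 8 * A * r + 3 * r\<^sup>2"
    by (simp add: power2_eq_square algebra_simps)
  finally have "0 \<le> U/8 * (6 * A\<^sup>2 + 8 * A * r + 3 * r\<^sup>2) + U/4 * (2 * \<rho>\<^sup>2 + 1/2 - A\<^sup>2) + 2 * U * r * \<rho>"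
    using assms(1-3) A by simp
  then show ?thesis
    by (simp add: algebra_simps)
qed

definition coercivity_const :: "real \<Rightarrow> real \<Rightarrow> real \<Rightarrow> real" where
  "coercivity_const T U \<mu> = U/8 + T + 4 * \<mu>\<^sup>2 / U + 4 * (\<bar>\<mu>\<bar> + T)\<^sup>2 / U"

lemma coercivity_const_pos: "U > 0 \<Longrightarrow> T \<ge> 0 \<Longrightarrow> coercivity_const T U \<mu> > 0"
  by (simp add: coercivity_const_def add_pos_nonneg)

lemma Ffun_lower_bound:
  assumes "U > 0" and "T \<ge> 0" and D: "(g, a, r) \<in> domD"
  shows "U/16 * (r\<^sup>2 + (\<integral>p. g p \<partial>torus)\<^sup>2) - coercivity_const T U \<mu>
    \<le> Ffun T U \<mu> g a r"
proof -
  define \<rho> where "\<rho> = (\<integral>p. g p \<partial>torus)"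
  define A where "A = (\<integral>p. a p \<partial>torus)"
  have r: "0 \<le> r" and \<rho>: "0 \<le> \<rho>"
    using domD_nonneg[OF D] by (simp_all add: \<rho>_def)
  have kinetic: "- \<mu> * \<rho> \<le> (\<integral>p. (disp p - \<mu>) * g p \<partial>torus)"
    unfolding \<rho>_def using D by (intro kinetic_integral_ge) (auto simp: domD_def elim: AE_mp)
  have entropy: "T * entropy g a \<le> T + T * \<rho>"
    using mult_left_mono[OF entropy_le[OF D] assms(2)] by (simp add: \<rho>_def algebra_simps)
  have "\<bar>A\<bar> \<le> (\<integral>p. \<bar>a p\<bar> \<partial>torus)"
    unfolding A_def by (rule integral_abs_bound)
  also have "\<dots> \<le> \<rho> + 1/2"
    using domD_integral_abs_le[OF D] by (simp add: \<rho>_def)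
  finally have "\<bar>A\<bar> \<le> \<rho> + 1/2" .
  then have interaction:
    "U/8 * r\<^sup>2 + U/2 * \<rho>\<^sup>2 - U/8 \<le> U/2 * A\<^sup>2 + U * \<rho>\<^sup>2 + U * r * A + 2 * U * r * \<rho> + U/2 * r\<^sup>2"
    using assms(1) r \<rho> by (intro interaction_lower_bound) auto
  have "\<bar>\<mu>\<bar> * r \<le> U/16 * r\<^sup>2 + 4 * \<mu>\<^sup>2 / U"
    using young_mult_le[of "U/16" "\<bar>\<mu>\<bar>" r] assms(1) by simp
  moreover have "(\<bar>\<mu>\<bar> + T) * \<rho> \<le> U/16 * \<rho>\<^sup>2 + 4 * (\<bar>\<mu>\<bar> + T)\<^sup>2 / U"
    using young_mult_le[of "U/16" "\<bar>\<mu>\<bar> + T" \<rho>] assms(1) by simp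
  moreover have "\<mu> * r \<le> \<bar>\<mu>\<bar> * r" "- \<bar>\<mu>\<bar> * \<rho> \<le> - \<mu> * \<rho>"
    using r \<rho> by (simp_all add: mult_right_mono)
  moreover have "U/16 * \<rho>\<^sup>2 \<le> U/2 * \<rho>\<^sup>2 - U/16 * \<rho>\<^sup>2"
    using assms(1) by simp
  ultimately show ?thesis
    using kinetic entropy interaction
    unfolding Ffun_def coercivity_const_def \<rho>_def[symmetric] A_def[symmetric]
    by (simp add: algebra_simps)
qed

lemma domD_bounded_of_Ffun_bounded:
  assumes "U > 0" and "T \<ge> 0"
    and D: "\<And>n. (gs n, as n, rs n) \<in> domD"
    and K: "\<And>n. Ffun T U \<mu> (gs n) (as n) (rs n) \<le> K"
  shows "\<exists>B. \<forall>n. \<bar>rs n\<bar> \<le> B \<and> (\<integral>p. \<bar>gs n p\<bar> \<partial>torus) \<le> B \<and> (\<integral>p. \<bar>as n p\<bar> \<partial>torus) \<le> B"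
proof (intro exI allI)
  fix n
  define M where "M = 16 * (K + coercivity_const T U \<mu>) / U"
  define \<rho> where "\<rho> = (\<integral>p. gs n p \<partial>torus)"
  have "U/16 * ((rs n)\<^sup>2 + \<rho>\<^sup>2) \<le> K + coercivity_const T U \<mu>"
    using Ffun_lower_bound[OF assms(1,2) D, of n \<mu>] K[of n] by (simp add: \<rho>_def)
  then have "(rs n)\<^sup>2 + \<rho>\<^sup>2 \<le> M"
    using assms(1) by (simp add: M_def field_simps)
  then have "(rs n)\<^sup>2 \<le> M" and "\<rho>\<^sup>2 \<le> M"
    using zero_le_power2[of "rs n"] zero_le_power2[of \<rho>] by linarith+
  then have "rs n \<le> sqrt M" and "\<rho> \<le> sqrt M"
    by (simp_all add: real_le_rsqrt)
  then show "\<bar>rs n\<bar> \<le> sqrt M + 1/2 \<and> (\<integral>p. \<bar>gs n p\<bar> \<partial>torus) \<le> sqrt M + 1/2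
      \<and> (\<integral>p. \<bar>as n p\<bar> \<partial>torus) \<le> sqrt M + 1/2"
    using domD_nonneg[OF D] domD_integral_abs_eq[OF D] domD_integral_abs_le[OF D, of n]
    by (simp add: \<rho>_def)
qed

theorem corollary3p2:
  fixes U \<mu> T :: real
  assumes "U > 0" and "T \<ge> 0"
  shows "(\<exists>\<eta> C. \<eta> > 0 \<and> C > 0 \<and>
           (\<forall>g a r. (g, a, r) \<in> domD \<longrightarrow>
              Ffun T U \<mu> g a r \<ge> \<eta> * (r\<^sup>2 + (\<integral>p. g p \<partial>torus)\<^sup>2) - C))
       \<and> (\<forall>(gs :: nat \<Rightarrow> real^3 \<Rightarrow> real) (as :: nat \<Rightarrow> real^3 \<Rightarrow> real) (rs :: nat \<Rightarrow> real).
            (\<forall>n. (gs n, as n, rs n) \<in> domD) \<and>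
            (\<lambda>n. Ffun T U \<mu> (gs n) (as n) (rs n))
               \<longlonglongrightarrow> (INF x\<in>domD. case x of (g, a, r) \<Rightarrow> Ffun T U \<mu> g a r)
            \<longrightarrow> (\<exists>B. \<forall>n. \<bar>rs n\<bar> \<le> B \<and>
                        (\<integral>p. \<bar>gs n p\<bar> \<partial>torus) \<le> B \<and>
                        (\<integral>p. \<bar>as n p\<bar> \<partial>torus) \<le> B))"
proof (intro conjI allI impI; (elim conjE)?)
  show "\<exists>\<eta> C. \<eta> > 0 \<and> C > 0 \<and> (\<forall>g a r. (g, a, r) \<in> domD \<longrightarrow>
      Ffun T U \<mu> g a r \<ge> \<eta> * (r\<^sup>2 + (\<integral>p. g p \<partial>torus)\<^sup>2) - C)"
    using assms coercivity_const_pos[OF assms] Ffun_lower_bound[OF assms]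
    by (intro exI[of _ "U/16"] exI[of _ "coercivity_const T U \<mu>"]) auto
next
  fix gs as rs
  assume D: "\<forall>n. (gs n, as n, rs n) \<in> domD"
    and "(\<lambda>n. Ffun T U \<mu> (gs n) (as n) (rs n))
      \<longlonglongrightarrow> (INF x\<in>domD. case x of (g, a, r) \<Rightarrow> Ffun T U \<mu> g a r)"
  then have "Bseq (\<lambda>n. Ffun T U \<mu> (gs n) (as n) (rs n))"
    by (intro convergent_imp_Bseq convergentI)
  then obtain K where "\<And>n. \<bar>Ffun T U \<mu> (gs n) (as n) (rs n)\<bar> \<le> K"
    by (auto simp: Bseq_def)
  with assms D show "\<exists>B. \<forall>n. \<bar>rs n\<bar> \<le> B \<and> (\<integral>p. \<bar>gs n p\<bar> \<partial>torus) \<le> B \<and> (\<integral>p. \<bar>as n p\<bar> \<partial>torus) \<le> B"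
    by (intro domD_bounded_of_Ffun_bounded) (auto intro: abs_le_D1)
qed

end
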